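(* Let $G$ be a sparsifiable graph and $H$ a graph of minimum degree at least $3$. If $G$ contains $H$ as a minor, then $G$ contains $H$ as an induced minor.
   Context: Graphs are finite and simple. A vertex $v$ of a graph is sparsifiable if (1) $v$ has degree at most $2$, or (2) $v$ has degree $3$ and all of its neighbors have degree at most $2$, or (3) $v$ has degree $3$, one of its neighbors has degree at most $2$, and the two other neighbors form a triangle with $v$. A graph is sparsifiable if every vertex of it is sparsifiable. A minor model of $H$ in $G$ is a family of pairwise disjoint sets $X_v\subseteq V(G)$, $v\in V(H)$, each inducing a connected subgraph, such that for every edge $uv\in E(H)$ there is an edge of $G$ between $X_u$ and $X_v$; it is an induced minor model if moreover for distinct non-adjacent $u,v\in V(H)$ there is no edge between $X_u$ and $X_v$. $G$ contains $H$ as a (induced) minor iff there is a (induced) minor model of $H$ in $G$. *)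

theory Defs
  imports Main
begin

definition simple_graph :: "'a set \<Rightarrow> 'a set set \<Rightarrow> bool" where
  "simple_graph V E \<longleftrightarrow> finite V \<and>
     (\<forall>e\<in>E. \<exists>u v. u \<noteq> v \<and> u \<in> V \<and> v \<in> V \<and> e = {u, v})"

definition neighbors :: "'a set \<Rightarrow> 'a set set \<Rightarrow> 'a \<Rightarrow> 'a set" where
  "neighbors V E v = {u \<in> V. {u, v} \<in> E}"

definition degree :: "'a set \<Rightarrow> 'a set set \<Rightarrow> 'a \<Rightarrow> nat" where
  "degree V E v = card (neighbors V E v)"

definition sparsifiable_vertex :: "'a set \<Rightarrow> 'a set set \<Rightarrow> 'a \<Rightarrow> bool" where
  "sparsifiable_vertex V E v \<longleftrightarrow>
     degree V E v \<le> 2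
   \<or> (degree V E v = 3 \<and> (\<forall>u\<in>neighbors V E v. degree V E u \<le> 2))
   \<or> (degree V E v = 3 \<and> (\<exists>a b c. neighbors V E v = {a, b, c} \<and> a \<noteq> b \<and> a \<noteq> c \<and> b \<noteq> c
          \<and> degree V E a \<le> 2 \<and> {b, c} \<in> E))"

definition sparsifiable :: "'a set \<Rightarrow> 'a set set \<Rightarrow> bool" where
  "sparsifiable V E \<longleftrightarrow> (\<forall>v\<in>V. sparsifiable_vertex V E v)"

definition connected_in :: "'a set \<Rightarrow> 'a set set \<Rightarrow> 'a set \<Rightarrow> bool" where
  "connected_in V E X \<longleftrightarrow> X \<subseteq> V \<and> X \<noteq> {} \<and>
     (\<forall>x\<in>X. \<forall>y\<in>X. (x, y) \<in> {(a, b). a \<in> X \<and> b \<in> X \<and> {a, b} \<in> E}\<^sup>*)"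

definition has_edge_between :: "'a set set \<Rightarrow> 'a set \<Rightarrow> 'a set \<Rightarrow> bool" where
  "has_edge_between E A B \<longleftrightarrow> (\<exists>x\<in>A. \<exists>y\<in>B. {x, y} \<in> E)"

definition minor_model ::
  "'a set \<Rightarrow> 'a set set \<Rightarrow> 'b set \<Rightarrow> 'b set set \<Rightarrow> ('b \<Rightarrow> 'a set) \<Rightarrow> bool" where
  "minor_model V E VH EH X \<longleftrightarrow>
     (\<forall>v\<in>VH. connected_in V E (X v))
   \<and> (\<forall>u\<in>VH. \<forall>v\<in>VH. u \<noteq> v \<longrightarrow> X u \<inter> X v = {})
   \<and> (\<forall>u\<in>VH. \<forall>v\<in>VH. {u, v} \<in> EH \<longrightarrow> has_edge_between E (X u) (X v))"

definition induced_minor_model ::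
  "'a set \<Rightarrow> 'a set set \<Rightarrow> 'b set \<Rightarrow> 'b set set \<Rightarrow> ('b \<Rightarrow> 'a set) \<Rightarrow> bool" where
  "induced_minor_model V E VH EH X \<longleftrightarrow> minor_model V E VH EH X
   \<and> (\<forall>u\<in>VH. \<forall>v\<in>VH. u \<noteq> v \<longrightarrow> {u, v} \<notin> EH \<longrightarrow> \<not> has_edge_between E (X u) (X v))"

definition has_minor :: "'a set \<Rightarrow> 'a set set \<Rightarrow> 'b set \<Rightarrow> 'b set set \<Rightarrow> bool" where
  "has_minor V E VH EH \<longleftrightarrow> (\<exists>X. minor_model V E VH EH X)"

definition has_induced_minor :: "'a set \<Rightarrow> 'a set set \<Rightarrow> 'b set \<Rightarrow> 'b set set \<Rightarrow> bool" where
  "has_induced_minor V E VH EH \<longleftrightarrow> (\<exists>X. induced_minor_model V E VH EH X)"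

end

theory Submission
  imports Defs
begin

(* Take a minor model X of H in G with the fewest bad edges, i.e. edges of G between branch sets
   X u, X v of non-adjacent vertices u, v of H; a bad edge xy (x in X u, y in X v) can always be
   destroyed without creating new ones.  Call a vertex attached to u if it lies in X u or in X t
   for a neighbor t of u.  As H has minimum degree 3, X u = {x} would force x to have three
   neighbors attached to u; so if at most one neighbor of x is attached to u, then x is a leaf of
   X u and can be deleted from X u.  This settles the case deg x <= 2.  Otherwise sparsifiability
   makes x and y vertices of degree 3 on a triangle xyc whose remaining neighbors have degree
   <= 2.  Then x or y can be deleted from its branch set, or a common neighbor of degree <= 2
   replaces x as the endpoint of a bad edge, or c lies in X w for a common neighbor w of u and v
   in H, and x is moved from X u to X w. *)

lemma simple_graph_edgeD:
  assumes "simple_graph V E" "{x, y} \<in> E"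
  shows "x \<noteq> y" "x \<in> V" "y \<in> V"
proof -
  from assms obtain u v where "u \<noteq> v" "u \<in> V" "v \<in> V" "{x, y} = {u, v}"
    unfolding simple_graph_def by blast
  then show "x \<noteq> y" "x \<in> V" "y \<in> V" by (auto simp: doubleton_eq_iff)
qed

lemma simple_graph_finite_edges:
  assumes "simple_graph V E"
  shows "finite E"
proof -
  have "E \<subseteq> Pow V" using assms unfolding simple_graph_def by auto
  moreover have "finite V" using assms unfolding simple_graph_def by blast
  ultimately show ?thesis by (meson finite_Pow_iff finite_subset)
qed

lemma mem_neighbors_iff:
  assumes "simple_graph V E"
  shows "q \<in> neighbors V E x \<longleftrightarrow> {x, q} \<in> E"
  using simple_graph_edgeD[OF assms] unfolding neighbors_def by (auto simp: insert_commute)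

lemma has_edge_between_commute:
  "has_edge_between E A B \<longleftrightarrow> has_edge_between E B A"
  unfolding has_edge_between_def by (metis insert_commute)

definition induced_adj :: "'a set set \<Rightarrow> 'a set \<Rightarrow> ('a \<times> 'a) set" where
  "induced_adj E X = {(a, b). a \<in> X \<and> b \<in> X \<and> {a, b} \<in> E}"

lemma connected_in_iff:
  "connected_in V E X \<longleftrightarrow> X \<subseteq> V \<and> X \<noteq> {} \<and> (\<forall>x\<in>X. \<forall>y\<in>X. (x, y) \<in> (induced_adj E X)\<^sup>*)"
  unfolding connected_in_def induced_adj_def by simp

lemma connected_in_singleton_if_isolated:
  assumes "connected_in V E X" "x \<in> X" "\<forall>q\<in>X. {x, q} \<notin> E"
  shows "X = {x}"
proof -
  have "p = x" if "p \<in> X" for p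
  proof -
    have "(x, p) \<in> (induced_adj E X)\<^sup>*" using assms that unfolding connected_in_iff by blast
    then show ?thesis
      by (cases rule: converse_rtranclE) (use assms(3) in \<open>auto simp: induced_adj_def\<close>)
  qed
  then show ?thesis using assms(2) by blast
qed

lemma connected_in_Diff_leaf:
  assumes conn: "connected_in V E X" and z: "z \<in> X" "z \<noteq> x"
    and leaf: "\<forall>q\<in>X. {x, q} \<in> E \<longrightarrow> q = z"
  shows "connected_in V E (X - {x})"
proof -
  let ?R = "induced_adj E (X - {x})"
  \<comment> \<open>A walk in X from p can be rerouted to avoid the leaf x, ending in z instead of x.\<close>
  have "(p, if r = x then z else r) \<in> ?R\<^sup>*"
    if "(p, r) \<in> (induced_adj E X)\<^sup>*" "p \<in> X - {x}" for p r
    using that(1)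
  proof (induction rule: rtrancl_induct)
    case base
    then show ?case using that(2) by simp
  next
    case (step r r')
    then have r: "r \<in> X" "r' \<in> X" "{r, r'} \<in> E" unfolding induced_adj_def by auto
    consider "r' = x" | "r = x" "r' \<noteq> x" | "r \<noteq> x" "r' \<noteq> x" by blast
    then show ?case
    proof cases
      case 1
      then have "r = x \<or> r = z" using leaf r by (auto simp: insert_commute)
      then show ?thesis using step.IH 1 by auto
    next
      case 2
      then have "r' = z" using leaf r by auto
      then show ?thesis using step.IH 2 by auto
    next
      case 3
      then have "(r, r') \<in> ?R" using r unfolding induced_adj_def by auto
      then show ?thesis using step.IH 3 by auto
    qed
  qed
  then have "\<forall>p\<in>X - {x}. \<forall>q\<in>X - {x}. (p, q) \<in> ?R\<^sup>*"
    using conn unfolding connected_in_iff by fastforce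
  then show ?thesis using conn z unfolding connected_in_iff by blast
qed

lemma connected_in_insert:
  assumes "simple_graph V E" "connected_in V E X" "c \<in> X" "{x, c} \<in> E"
  shows "connected_in V E (insert x X)"
proof -
  let ?R = "induced_adj E (insert x X)"
  have "(induced_adj E X)\<^sup>* \<subseteq> ?R\<^sup>*" by (rule rtrancl_mono) (auto simp: induced_adj_def)
  moreover have "(x, c) \<in> ?R" "(c, x) \<in> ?R"
    using assms(3,4) by (auto simp: induced_adj_def insert_commute)
  ultimately have "(p, c) \<in> ?R\<^sup>*" "(c, p) \<in> ?R\<^sup>*" if "p \<in> insert x X" for p
    using that assms(2,3) unfolding connected_in_iff by blast+
  then have "\<forall>p\<in>insert x X. \<forall>q\<in>insert x X. (p, q) \<in> ?R\<^sup>*"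
    by (meson rtrancl_trans)
  then show ?thesis
    using assms(2) simple_graph_edgeD(2)[OF assms(1,4)] unfolding connected_in_iff by blast
qed

lemma sparsifiable_high_degree_edge:
  assumes G: "simple_graph V E" and sp: "sparsifiable V E" and xy: "{x, y} \<in> E"
    and dx: "2 < degree V E x" and dy: "2 < degree V E y"
  shows "\<exists>a c. neighbors V E x = {a, y, c} \<and> degree V E a \<le> 2 \<and> {y, c} \<in> E"
proof -
  have y: "y \<in> neighbors V E x" using mem_neighbors_iff[OF G] xy by blast
  have "sparsifiable_vertex V E x" using sp simple_graph_edgeD(2)[OF G xy] unfolding sparsifiable_def by blast
  then obtain a b c where abc: "neighbors V E x = {a, b, c}" "degree V E a \<le> 2" "{b, c} \<in> E"
    using dx dy y unfolding sparsifiable_vertex_def by auto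
  have "y = b \<or> y = c" using y abc(1,2) dy by auto
  then show ?thesis
  proof
    assume "y = b"
    then show ?thesis using abc by blast
  next
    assume "y = c"
    then have "neighbors V E x = {a, y, b} \<and> {y, b} \<in> E" using abc by (auto simp: insert_commute)
    then show ?thesis using abc(2) by blast
  qed
qed

lemma minor_model_connected:
  "minor_model V E VH EH X \<Longrightarrow> v \<in> VH \<Longrightarrow> connected_in V E (X v)"
  unfolding minor_model_def by blast

lemma minor_model_disjoint:
  "minor_model V E VH EH X \<Longrightarrow> s \<in> VH \<Longrightarrow> t \<in> VH \<Longrightarrow> q \<in> X s \<Longrightarrow> q \<in> X t \<Longrightarrow> s = t"
  unfolding minor_model_def by blast

locale minor_setting =
  fixes V :: "'a set" and E :: "'a set set" and VH :: "'b set" and EH :: "'b set set"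
  assumes G: "simple_graph V E" and H: "simple_graph VH EH"
    and min_degree: "\<forall>v\<in>VH. 3 \<le> degree VH EH v"
begin

abbreviation model :: "('b \<Rightarrow> 'a set) \<Rightarrow> bool" where
  "model X \<equiv> minor_model V E VH EH X"

lemma model_edgeE:
  assumes "model X" "{s, t} \<in> EH"
  obtains p q where "p \<in> X s" "q \<in> X t" "{p, q} \<in> E"
  using assms simple_graph_edgeD[OF H] unfolding minor_model_def has_edge_between_def by blast

definition bad_crossing :: "('b \<Rightarrow> 'a set) \<Rightarrow> 'b \<Rightarrow> 'b \<Rightarrow> 'a \<Rightarrow> 'a \<Rightarrow> bool" where
  "bad_crossing X u v x y \<longleftrightarrow>
     u \<in> VH \<and> v \<in> VH \<and> u \<noteq> v \<and> {u, v} \<notin> EH \<and> x \<in> X u \<and> y \<in> X v \<and> {x, y} \<in> E"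

definition bad_edges :: "('b \<Rightarrow> 'a set) \<Rightarrow> 'a set set" where
  "bad_edges X = {{x, y} | x y. \<exists>u v. bad_crossing X u v x y}"

definition attached :: "('b \<Rightarrow> 'a set) \<Rightarrow> 'b \<Rightarrow> 'a \<Rightarrow> bool" where
  "attached X u q \<longleftrightarrow> (\<exists>t\<in>VH. (t = u \<or> {u, t} \<in> EH) \<and> q \<in> X t)"

definition improvable :: "('b \<Rightarrow> 'a set) \<Rightarrow> bool" where
  "improvable X \<longleftrightarrow> (\<exists>X'. model X' \<and> bad_edges X' \<subset> bad_edges X)"

lemma bad_crossing_commute: "bad_crossing X u v x y \<longleftrightarrow> bad_crossing X v u y x"
  unfolding bad_crossing_def by (auto simp: insert_commute)

lemma finite_bad_edges: "finite (bad_edges X)"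
proof -
  have "bad_edges X \<subseteq> E" unfolding bad_edges_def bad_crossing_def by blast
  then show ?thesis using simple_graph_finite_edges[OF G] finite_subset by blast
qed

lemma induced_minor_model_if_no_bad_edges:
  assumes "model X" "bad_edges X = {}"
  shows "induced_minor_model V E VH EH X"
  using assms unfolding induced_minor_model_def has_edge_between_def bad_edges_def bad_crossing_def
  by blast

lemma not_attached_across:
  assumes X: "model X" and xy: "bad_crossing X u v x y" and q: "q \<in> X v"
  shows "\<not> attached X u q"
proof
  assume "attached X u q"
  then obtain t where t: "t \<in> VH" "t = u \<or> {u, t} \<in> EH" "q \<in> X t" unfolding attached_def by blast
  then have "t = v" using minor_model_disjoint[OF X] q xy unfolding bad_crossing_def by blast
  then show False using t xy unfolding bad_crossing_def by blast
qed

(* Each H-neighbor t of u needs its own G-neighbor of x in X t. *)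
lemma degree_le_card_attached_neighbors:
  assumes X: "model X" and u: "u \<in> VH" and Xu: "X u = {x}"
  shows "degree VH EH u \<le> card {q. {x, q} \<in> E \<and> attached X u q}"
proof -
  let ?N = "neighbors VH EH u" and ?A = "{q. {x, q} \<in> E \<and> attached X u q}"
  have "\<forall>t\<in>?N. \<exists>q. q \<in> X t \<and> {x, q} \<in> E"
  proof
    fix t assume "t \<in> ?N"
    then have "{u, t} \<in> EH" using mem_neighbors_iff[OF H] by blast
    then obtain p q where "p \<in> X u" "q \<in> X t" "{p, q} \<in> E" by (rule model_edgeE[OF X])
    moreover have "p = x" using \<open>p \<in> X u\<close> Xu by blast
    ultimately show "\<exists>q. q \<in> X t \<and> {x, q} \<in> E" by blast
  qed
  from bchoice[OF this] obtain f where f: "\<forall>t\<in>?N. f t \<in> X t \<and> {x, f t} \<in> E" by blast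
  have "inj_on f ?N"
  proof (rule inj_onI)
    fix t t' assume "t \<in> ?N" "t' \<in> ?N" "f t = f t'"
    then show "t = t'"
      using f minor_model_disjoint[OF X, of t t' "f t"] unfolding neighbors_def by auto
  qed
  then have "degree VH EH u = card (f ` ?N)" unfolding degree_def by (simp add: card_image)
  also have "\<dots> \<le> card ?A"
  proof (rule card_mono)
    have "?A \<subseteq> V" using simple_graph_edgeD(3)[OF G] by blast
    then show "finite ?A" using G finite_subset unfolding simple_graph_def by blast
    show "f ` ?N \<subseteq> ?A"
      using f mem_neighbors_iff[OF H] unfolding neighbors_def attached_def by fastforce
  qed
  finally show ?thesis .
qed

lemma has_neighbor_in_branch:
  assumes X: "model X" and u: "u \<in> VH" and x: "x \<in> X u"
    and attached_nbrs: "{q. {x, q} \<in> E \<and> attached X u q} \<subseteq> {a, c}"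
  obtains q where "q \<in> X u" "{x, q} \<in> E"
proof (rule ccontr)
  assume "\<not> thesis"
  with that have "X u = {x}"
    using connected_in_singleton_if_isolated[OF minor_model_connected[OF X u] x] by blast
  then have "3 \<le> card {q. {x, q} \<in> E \<and> attached X u q}"
    using degree_le_card_attached_neighbors[OF X u] min_degree u by fastforce
  also have "\<dots> \<le> card {a, c}" using attached_nbrs by (rule card_mono[rotated]) simp
  also have "\<dots> \<le> 2" by (simp add: card_insert_if)
  finally show False by simp
qed

lemma improvable_if_no_crossing_at:
  assumes X': "model X'" and xy: "bad_crossing X u v x y"
    and off_x: "\<And>t. X' t - {x} \<subseteq> X t" and no_crossing: "\<And>s t q. \<not> bad_crossing X' s t x q"
  shows "improvable X"
proof -
  have avoid_x: "p \<noteq> x \<and> q \<noteq> x" if "bad_crossing X' s t p q" for s t p q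
    using that no_crossing[of s t q] no_crossing[of t s p] bad_crossing_commute[of X' s t p q] by auto
  then have "bad_crossing X s t p q" if "bad_crossing X' s t p q" for s t p q
    using that off_x unfolding bad_crossing_def by blast
  then have "bad_edges X' \<subseteq> bad_edges X" unfolding bad_edges_def by blast
  moreover have "{x, y} \<notin> bad_edges X'"
    using avoid_x unfolding bad_edges_def by (auto simp: doubleton_eq_iff)
  moreover have "{x, y} \<in> bad_edges X" using xy unfolding bad_edges_def by blast
  ultimately show ?thesis using X' unfolding improvable_def by blast
qed

lemma improvable_by_removing:
  assumes X: "model X" and xy: "bad_crossing X u v x y"
    and attached_nbrs: "{q. {x, q} \<in> E \<and> attached X u q} \<subseteq> {z}"
  shows "improvable X"
proof -
  have u: "u \<in> VH" and x: "x \<in> X u" using xy unfolding bad_crossing_def by auto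
  have attached_u: "attached X u q" if "q \<in> X u" for q using that u unfolding attached_def by blast
  obtain q where "q \<in> X u" "{x, q} \<in> E"
    using has_neighbor_in_branch[OF X u x] attached_nbrs by blast
  then have z: "z \<in> X u" "{x, z} \<in> E" using attached_u attached_nbrs by blast+
  have leaf: "\<forall>q\<in>X u. {x, q} \<in> E \<longrightarrow> q = z" using attached_u attached_nbrs by blast
  have "z \<noteq> x" using simple_graph_edgeD(1)[OF G z(2)] by simp
  then have conn: "connected_in V E (X u - {x})"
    using connected_in_Diff_leaf[OF minor_model_connected[OF X u] z(1) _ leaf] by blast
  define X' where "X' = X(u := X u - {x})"
  have sub: "X' t \<subseteq> X t" for t unfolding X'_def by auto
  have edge_avoids_x: "p \<noteq> x"
    if "s \<in> VH" "{s, t} \<in> EH" "p \<in> X s" "q \<in> X t" "{p, q} \<in> E" for s t p q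
  proof
    assume "p = x"
    then have "s = u" using minor_model_disjoint[OF X] that x u by blast
    then have "attached X u q"
      using that simple_graph_edgeD(3)[OF H] unfolding attached_def by blast
    then have "q = z" using attached_nbrs that \<open>p = x\<close> by blast
    then have "t = u"
      using minor_model_disjoint[OF X] z(1) u that(4) simple_graph_edgeD(3)[OF H that(2)] by blast
    then show False using simple_graph_edgeD(1)[OF H that(2)] \<open>s = u\<close> by simp
  qed
  have "model X'"
    unfolding minor_model_def
  proof (intro conjI ballI impI)
    fix t assume "t \<in> VH"
    then show "connected_in V E (X' t)"
      using minor_model_connected[OF X] conn unfolding X'_def by simp
  next
    fix s t assume "s \<in> VH" "t \<in> VH" "s \<noteq> t"
    then show "X' s \<inter> X' t = {}" using sub minor_model_disjoint[OF X] by blast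
  next
    fix s t assume st: "s \<in> VH" "t \<in> VH" "{s, t} \<in> EH"
    obtain p q where pq: "p \<in> X s" "q \<in> X t" "{p, q} \<in> E" using model_edgeE[OF X st(3)] .
    have "p \<noteq> x" using edge_avoids_x st pq by blast
    moreover have "q \<noteq> x" using edge_avoids_x[of t s q p] st pq by (simp add: insert_commute)
    ultimately show "has_edge_between E (X' s) (X' t)"
      using pq unfolding X'_def has_edge_between_def by auto
  qed
  moreover have "X' t - {x} \<subseteq> X t" for t using sub by blast
  moreover have "\<not> bad_crossing X' s t x q" for s t q
    using minor_model_disjoint[OF X _ u _ x] unfolding X'_def bad_crossing_def by auto
  ultimately show ?thesis using improvable_if_no_crossing_at xy by blast
qed

lemma improvable_if_low_degree:
  assumes X: "model X" and xy: "bad_crossing X u v x y" and dx: "degree V E x \<le> 2"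
  shows "improvable X"
proof -
  let ?N = "neighbors V E x"
  have y: "y \<in> ?N" using xy mem_neighbors_iff[OF G] unfolding bad_crossing_def by blast
  have "finite ?N" using G unfolding simple_graph_def neighbors_def by simp
  moreover have "card (?N - {y}) \<le> 1" using dx y unfolding degree_def by simp
  ultimately have "\<forall>a\<in>?N - {y}. \<forall>b\<in>?N - {y}. a = b"
    using card_le_Suc0_iff_eq[of "?N - {y}"] by simp
  then obtain z where z: "?N - {y} \<subseteq> {z}" by (cases "?N - {y} = {}") blast+
  have "\<not> attached X u y" using not_attached_across[OF X xy] xy unfolding bad_crossing_def by blast
  then have "{q. {x, q} \<in> E \<and> attached X u q} \<subseteq> {z}" using z mem_neighbors_iff[OF G] by blast
  then show ?thesis using improvable_by_removing[OF X xy] by blast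
qed

lemma improvable_by_moving:
  assumes X: "model X" and xy: "bad_crossing X u v x y"
    and Nx: "neighbors V E x = {a, y, c}" and a: "a \<in> X u" and c: "c \<in> X w"
    and w: "w \<in> VH" "{u, w} \<in> EH" "{v, w} \<in> EH"
  shows "improvable X"
proof -
  have u: "u \<in> VH" "x \<in> X u" and v: "v \<in> VH" "y \<in> X v" and uv: "u \<noteq> v" "{u, v} \<notin> EH"
    using xy unfolding bad_crossing_def by auto
  have wu: "w \<noteq> u" using simple_graph_edgeD(1)[OF H] w by auto
  have nbr: "{x, q} \<in> E \<longleftrightarrow> q = a \<or> q = y \<or> q = c" for q using Nx mem_neighbors_iff[OF G] by blast
  have in_branch: "(t = u \<and> q = a) \<or> (t = v \<and> q = y) \<or> (t = w \<and> q = c)"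
    if "t \<in> VH" "q \<in> X t" "{x, q} \<in> E" for t q
  proof -
    have "q = a \<or> q = y \<or> q = c" using nbr that(3) by blast
    then show ?thesis
      using minor_model_disjoint[OF X that(1) _ that(2)] a v(2) c u(1) v(1) w(1) by auto
  qed
  have ax: "a \<noteq> x" using nbr simple_graph_edgeD(1)[OF G] by blast
  have leaf: "\<forall>q\<in>X u. {x, q} \<in> E \<longrightarrow> q = a" using in_branch u(1) uv(1) wu by blast
  have conn_u: "connected_in V E (X u - {x})"
    using connected_in_Diff_leaf[OF minor_model_connected[OF X u(1)] a ax leaf] .
  have conn_w: "connected_in V E (insert x (X w))"
    using connected_in_insert[OF G minor_model_connected[OF X w(1)] c] nbr by blast
  define X' where "X' = X(u := X u - {x}, w := insert x (X w))"
  have off_x: "X' t - {x} \<subseteq> X t" and kept: "X t - {x} \<subseteq> X' t" for t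
    unfolding X'_def by auto
  have x_in: "x \<in> X' t \<longleftrightarrow> t = w" if "t \<in> VH" for t
    using minor_model_disjoint[OF X that u(1) _ u(2)] wu unfolding X'_def by auto
  have edge_avoids_x: "p \<noteq> x"
    if "{s, t} \<in> EH" "{s, t} \<noteq> {u, w}" "s \<in> VH" "t \<in> VH" "p \<in> X s" "q \<in> X t" "{p, q} \<in> E"
    for s t p q
  proof
    assume "p = x"
    then have "s = u" using minor_model_disjoint[OF X that(3) u(1)] that(5) u(2) by blast
    moreover have "s \<noteq> t" using simple_graph_edgeD(1)[OF H that(1)] .
    ultimately show False using in_branch[OF that(4,6)] that(1,2,7) \<open>p = x\<close> uv(2) by auto
  qed
  have "model X'"
    unfolding minor_model_def
  proof (intro conjI ballI impI)
    fix t assume "t \<in> VH"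
    then show "connected_in V E (X' t)"
      using minor_model_connected[OF X] conn_u conn_w unfolding X'_def by simp
  next
    fix s t assume st: "s \<in> VH" "t \<in> VH" "s \<noteq> t"
    show "X' s \<inter> X' t = {}"
      using x_in[OF st(1)] x_in[OF st(2)] st(3) off_x minor_model_disjoint[OF X st(1,2)] by blast
  next
    fix s t assume st: "s \<in> VH" "t \<in> VH" "{s, t} \<in> EH"
    show "has_edge_between E (X' s) (X' t)"
    proof (cases "{s, t} = {u, w}")
      case True
      have "a \<in> X' u" "x \<in> X' w" "{a, x} \<in> E"
        using a ax wu nbr unfolding X'_def by (auto simp: insert_commute)
      then have "has_edge_between E (X' u) (X' w)" unfolding has_edge_between_def by blast
      then show ?thesis using True has_edge_between_commute by (auto simp: doubleton_eq_iff)
    next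
      case False
      obtain p q where pq: "p \<in> X s" "q \<in> X t" "{p, q} \<in> E" using model_edgeE[OF X st(3)] .
      have "p \<noteq> x" using edge_avoids_x[OF st(3) False st(1,2) pq] .
      moreover have "q \<noteq> x"
        using edge_avoids_x[of t s q p] st pq False by (simp add: insert_commute)
      ultimately show ?thesis using pq kept unfolding has_edge_between_def by blast
    qed
  qed
  moreover have "\<not> bad_crossing X' s t x q" for s t q
  proof
    assume "bad_crossing X' s t x q"
    then have s: "s = w" and t: "t \<in> VH" "q \<in> X' t" "{x, q} \<in> E" "s \<noteq> t" "{s, t} \<notin> EH"
      using x_in unfolding bad_crossing_def by auto
    then have q: "q \<in> X t" using off_x simple_graph_edgeD(1)[OF G t(3)] by blast
    show False using in_branch[OF t(1) q t(3)] s t w by (auto simp: insert_commute)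
  qed
  ultimately show ?thesis using improvable_if_no_crossing_at[OF _ xy off_x] by blast
qed

lemma improvable_if_low_degree_common_neighbors:
  assumes X: "model X" and xy: "bad_crossing X u v x y" and Nx: "neighbors V E x = {a, y, c}"
    and a: "{y, a} \<in> E" "degree V E a \<le> 2" and c: "{y, c} \<in> E" "degree V E c \<le> 2"
  shows "improvable X"
proof -
  have u: "u \<in> VH" "x \<in> X u" and v: "v \<in> VH" "y \<in> X v" and "u \<noteq> v"
    using xy unfolding bad_crossing_def by auto
  have "\<not> attached X u y" using not_attached_across[OF X xy v(2)] .
  then have "{q. {x, q} \<in> E \<and> attached X u q} \<subseteq> {a, c}" using Nx mem_neighbors_iff[OF G] by blast
  then obtain q where q: "q \<in> X u" "{x, q} \<in> E" using has_neighbor_in_branch[OF X u] by blast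
  have "q \<noteq> y" using minor_model_disjoint[OF X u(1) v(1) q(1)] v(2) \<open>u \<noteq> v\<close> by blast
  then have "q = a \<or> q = c" using q(2) Nx mem_neighbors_iff[OF G] by blast
  then have "bad_crossing X u v q y \<and> degree V E q \<le> 2"
    using xy q(1) a c unfolding bad_crossing_def by (auto simp: insert_commute)
  then show ?thesis using improvable_if_low_degree[OF X] by blast
qed

lemma improvable_if_shared_triangle:
  assumes X: "model X" and xy: "bad_crossing X u v x y"
    and Nx: "neighbors V E x = {a, y, c}" and Ny: "neighbors V E y = {a', x, c}"
  shows "improvable X"
proof -
  have yx: "bad_crossing X v u y x" using xy bad_crossing_commute by blast
  have u: "u \<in> VH" "x \<in> X u" and v: "v \<in> VH" "y \<in> X v" and uv: "u \<noteq> v" "{u, v} \<notin> EH"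
    using xy unfolding bad_crossing_def by auto
  have nx: "{x, q} \<in> E \<longleftrightarrow> q = a \<or> q = y \<or> q = c" for q using Nx mem_neighbors_iff[OF G] by blast
  have ny: "{y, q} \<in> E \<longleftrightarrow> q = a' \<or> q = x \<or> q = c" for q using Ny mem_neighbors_iff[OF G] by blast
  have y_u: "\<not> attached X u y" using not_attached_across[OF X xy v(2)] .
  have x_v: "\<not> attached X v x" using not_attached_across[OF X yx u(2)] .
  show ?thesis
  proof (cases "attached X u c \<and> attached X v c")
    case False
    then consider "\<not> attached X u c" | "\<not> attached X v c" by blast
    then show ?thesis
    proof cases
      case 1
      then have "{q. {x, q} \<in> E \<and> attached X u q} \<subseteq> {a}" using nx y_u by blast
      then show ?thesis using improvable_by_removing[OF X xy] by blast
    next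
      case 2
      then have "{q. {y, q} \<in> E \<and> attached X v q} \<subseteq> {a'}" using ny x_v by blast
      then show ?thesis using improvable_by_removing[OF X yx] by blast
    qed
  next
    case True
    then obtain t t' where t: "t \<in> VH" "t = u \<or> {u, t} \<in> EH" "c \<in> X t"
      and t': "t' \<in> VH" "t' = v \<or> {v, t'} \<in> EH" "c \<in> X t'"
      unfolding attached_def by blast
    have "t' = t" using minor_model_disjoint[OF X t'(1) t(1) t'(3) t(3)] .
    then have w: "{u, t} \<in> EH" "{v, t} \<in> EH" using t t' uv by (auto simp: insert_commute)
    then have "t \<noteq> u" using simple_graph_edgeD(1)[OF H] by blast
    then have "c \<notin> X u" using minor_model_disjoint[OF X t(1) u(1) t(3)] by blast
    have "{q. {x, q} \<in> E \<and> attached X u q} \<subseteq> {a, c}" using nx y_u by blast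
    then obtain q where q: "q \<in> X u" "{x, q} \<in> E" using has_neighbor_in_branch[OF X u] by blast
    have "q \<noteq> y" using minor_model_disjoint[OF X u(1) v(1) q(1)] v(2) uv(1) by blast
    then have "a \<in> X u" using q nx[of q] \<open>c \<notin> X u\<close> by auto
    then show ?thesis using improvable_by_moving[OF X xy Nx _ t(3) t(1) w] by blast
  qed
qed

lemma improvable_if_bad_crossing:
  assumes sp: "sparsifiable V E" and X: "model X" and xy: "bad_crossing X u v x y"
  shows "improvable X"
proof (cases "degree V E x \<le> 2 \<or> degree V E y \<le> 2")
  case True
  then show ?thesis using improvable_if_low_degree[OF X] xy bad_crossing_commute by blast
next
  case False
  have e: "{x, y} \<in> E" "{y, x} \<in> E" using xy unfolding bad_crossing_def by (auto simp: insert_commute)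
  obtain a c where Nx: "neighbors V E x = {a, y, c}" "degree V E a \<le> 2" "{y, c} \<in> E"
    using sparsifiable_high_degree_edge[OF G sp e(1)] False by auto
  obtain a' c' where Ny: "neighbors V E y = {a', x, c'}" "degree V E a' \<le> 2" "{x, c'} \<in> E"
    using sparsifiable_high_degree_edge[OF G sp e(2)] False by auto
  have "c \<in> neighbors V E x" "c' \<in> neighbors V E y" using Nx(1) Ny(1) by auto
  then have "c \<noteq> x" "c' \<noteq> y" using mem_neighbors_iff[OF G] simple_graph_edgeD(1)[OF G] by blast+
  moreover have "c \<in> neighbors V E y" "c' \<in> neighbors V E x"
    using Nx(3) Ny(3) mem_neighbors_iff[OF G] by blast+
  ultimately have c: "c = a' \<or> c = c'" and c': "c' = a \<or> c' = c" using Nx(1) Ny(1) by auto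
  show ?thesis
  proof (cases "c' = c")
    case True
    then show ?thesis using improvable_if_shared_triangle[OF X xy Nx(1)] Ny(1) by blast
  next
    case False
    then have "c = a'" "c' = a" using c c' by auto
    moreover have "{y, c'} \<in> E" using Ny(1) mem_neighbors_iff[OF G] by blast
    ultimately show ?thesis
      using improvable_if_low_degree_common_neighbors[OF X xy Nx(1)] Nx(2,3) Ny(2) by blast
  qed
qed

lemma has_induced_minor_if_minor_model:
  assumes sp: "sparsifiable V E" and "model X"
  shows "has_induced_minor V E VH EH"
  using assms(2)
proof (induction "card (bad_edges X)" arbitrary: X rule: less_induct)
  case less
  show ?case
  proof (cases "bad_edges X = {}")
    case True
    then show ?thesis
      using induced_minor_model_if_no_bad_edges less.prems unfolding has_induced_minor_def by blast
  next
    case False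
    then obtain u v x y where "bad_crossing X u v x y" unfolding bad_edges_def by blast
    then obtain X' where "model X'" "bad_edges X' \<subset> bad_edges X"
      using improvable_if_bad_crossing[OF sp less.prems] unfolding improvable_def by blast
    then show ?thesis using less.hyps psubset_card_mono[OF finite_bad_edges] by blast
  qed
qed

end

theorem lemma2:
  fixes V :: "'a set" and E :: "'a set set" and VH :: "'b set" and EH :: "'b set set"
  assumes "simple_graph V E" and "sparsifiable V E"
    and "simple_graph VH EH" and "\<forall>v\<in>VH. degree VH EH v \<ge> 3"
    and "has_minor V E VH EH"
  shows "has_induced_minor V E VH EH"
proof -
  interpret minor_setting V E VH EH
    using assms(1,3,4) by unfold_locales
  from assms(5) obtain X where "minor_model V E VH EH X" unfolding has_minor_def by blast
  then show ?thesis using has_induced_minor_if_minor_model assms(2) by blast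
qed

end
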